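(* Let $m=(m_\lambda)_{\lambda\in\Lambda}$ be a formal tuple with $m_\lambda=G_0^\lambda+YG_1^\lambda$, where $G_0^\lambda,G_1^\lambda\in K[[s_\lambda]]$ for $\lambda\in\Lambda_0$ and $G_0^\infty,G_1^\infty\in s_\infty K[[s_\infty]]$, and suppose that for every $\lambda\in\Lambda$ $$\partial_tG_0^\lambda=0,\qquad \partial_tG_1^\lambda+\phi_\lambda(h)\,G_1^\lambda=\sum_{\lambda'\in\Lambda}\phi_\lambda\Big(\Pr_{\lambda'}\big(\phi_{\lambda'}(h)G_1^{\lambda'}\big)\Big)$$ (the formal version of the equation $\nabla_c(m)=0$; the right-hand side only involves the constant terms $G_1^{\lambda_i}(0)$, since $h$ has simple poles at the $\lambda_i$ and vanishes at $\infty$). Then $m\in M_c$, i.e. every $G_j^\lambda$ converges on the open unit disc $|s_\lambda|<1$; hence $m\in H$.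
   Context: Standing setup. Let $k$ be a finite field of odd characteristic $p$, $W(k)$ its ring of Witt vectors, $K$ the fraction field of $W(k)$, $|\cdot|$ the $p$-adic absolute value. Let $g\ge1$ and let $\lambda_1,\dots,\lambda_{2g+1}\in W(k)$ have pairwise distinct reductions modulo $p$. Put $Q(t)=\prod_{i=1}^{2g+1}(t-\lambda_i)$ and $h(t)=\frac{Q'(t)}{2Q(t)}$. Let $\Lambda=\{\lambda_1,\dots,\lambda_{2g+1},\infty\}$, $\Lambda_0=\Lambda\setminus\{\infty\}$. The local parameter at $\lambda\in\Lambda_0$ is $s_\lambda=t-\lambda$, and at $\infty$ it is $s_\infty=t^{-1}$; $\partial_t$ acts on series in $s_\lambda$ ($\lambda$ finite) as $d/ds_\lambda$ and on series in $s_\infty$ as $-s_\infty^2\,d/ds_\infty$. Let $B_K^\dagger$ be the ring of series $\sum_{\underline\ell\ge0}a_{\underline\ell}\,t^{\ell_0}\prod_{i}(t-\lambda_i)^{-\ell_i}$ ($a_{\underline\ell}\in K$) for which there is $\eta>1$ with $|a_{\underline\ell}|\eta^{\max_i\ell_i}\to0$; $\phi_\lambda(f)$ is the Laurent expansion of $f\in B_K^\dagger$ in $s_\lambda$. The principal part is $\Pr_\lambda(\sum a_\ell s_\lambda^\ell)=\sum_{\ell<0}a_\ell s_\lambda^\ell$ for $\lambda\in\Lambda_0$ and $\Pr_\infty(\sum a_\ell s_\infty^\ell)=\sum_{\ell\le0}a_\ell s_\infty^\ell$; its expansion at another point $\mu$ is denoted $\phi_\mu(\cdot)$ (and $\phi_\lambda(\Pr_\lambda(F))=\Pr_\lambda(F)$).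 For $\lambda\in\Lambda_0$, $\tilde R_{\lambda,c}$ is the space of $\sum_{\ell\ge0}a_\ell s_\lambda^\ell$ with $|a_\ell|\eta^\ell\to0$ for all $\eta<1$, and $R_{\infty,c}$ the analogous space of $\sum_{\ell\ge1}a_\ell s_\infty^\ell$. $B_c=\prod_{\lambda\in\Lambda_0}\tilde R_{\lambda,c}\times R_{\infty,c}$ is a $B_K^\dagger$-module via $(f\cdot G)^\mu=\phi_\mu(f)G^\mu-\sum_{\lambda\in\Lambda}\phi_\mu\big(\Pr_\lambda(\phi_\lambda(f)G^\lambda)\big)$. Let $A_K^\dagger=B_K^\dagger\oplus B_K^\dagger Y$ with $Y^2=Q(t)$, $\nabla_{GM}(1)=0$, $\nabla_{GM}(Y)=hY$; $M_c=A_K^\dagger\otimes_{B_K^\dagger}B_c$ with elements $m_c=1\otimes G_0+Y\otimes G_1$ ($G_0,G_1\in B_c$) and $\nabla_c(m_c)=1\otimes\partial_tG_0+Y\otimes(\partial_tG_1+h\cdot G_1)$. $H=\ker\nabla_c$ (the space $H^1_{MW,c}(V,\pi_*A_K^\dagger)$). *)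

theory Defs
  imports "HOL-Analysis.Analysis" "HOL-Computational_Algebra.Computational_Algebra"
begin

text \<open>(K, nv) is a complete discretely valued non-archimedean field of characteristic 0,
  normalised with nv p = 1/p, value group p^Z (so p is a uniformiser, i.e. K is absolutely
  unramified) and finite residue field (of characteristic p, since nv p < 1).  By Cohen /
  Witt theory such a field is exactly W(k)[1/p] for the finite field k = residue field,
  with its p-adic absolute value.\<close>

definition padic_Witt_field :: "nat \<Rightarrow> ('a::field_char_0 \<Rightarrow> real) \<Rightarrow> bool" where
  "padic_Witt_field p nv \<longleftrightarrow>
     prime p \<and> odd p \<and>
     (\<forall>x. nv x \<ge> 0) \<and> (\<forall>x. nv x = 0 \<longleftrightarrow> x = 0) \<and>
     (\<forall>x y. nv (x * y) = nv x * nv y) \<and>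
     (\<forall>x y. nv (x + y) \<le> max (nv x) (nv y)) \<and>
     nv (of_nat p) = 1 / real p \<and>
     (\<forall>x. x \<noteq> 0 \<longrightarrow> (\<exists>k::int. nv x = real p powr real_of_int k)) \<and>
     (\<forall>X::nat \<Rightarrow> 'a. (\<forall>e>0. \<exists>N. \<forall>m\<ge>N. \<forall>k\<ge>N. nv (X m - X k) < e)
          \<longrightarrow> (\<exists>L. (\<lambda>k. nv (X k - L)) \<longlonglongrightarrow> 0)) \<and>
     (\<exists>R. finite R \<and> (\<forall>x. nv x \<le> 1 \<longrightarrow> (\<exists>r\<in>R. nv r \<le> 1 \<and> nv (x - r) < 1)))"

text \<open>Points of Lambda: Some i stands for lambda_i (i < n), None stands for infinity.\<close>

definition pts :: "nat \<Rightarrow> nat option set" where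
  "pts n = insert None (Some ` {..<n})"

definition Qpoly :: "nat \<Rightarrow> (nat \<Rightarrow> 'a::field) \<Rightarrow> 'a poly" where
  "Qpoly n lam = (\<Prod>i<n. [:- lam i, 1:])"

text \<open>Laurent expansion of a polynomial in t in the local parameter s_mu:
  t = s + lambda_i at lambda_i, t = 1/s at infinity.\<close>

definition phi_poly :: "(nat \<Rightarrow> 'a::field) \<Rightarrow> nat option \<Rightarrow> 'a poly \<Rightarrow> 'a fls" where
  "phi_poly lam mu P = (case mu of
      Some i \<Rightarrow> fps_to_fls (fps_of_poly (pcompose P [:lam i, 1:]))
    | None \<Rightarrow> (\<Sum>k\<le>degree P. fls_const (coeff P k) * fls_X_intpow (- int k)))"

definition phi_rat :: "(nat \<Rightarrow> 'a::field) \<Rightarrow> nat option \<Rightarrow> 'a poly \<Rightarrow> 'a poly \<Rightarrow> 'a fls" where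
  "phi_rat lam mu P R = phi_poly lam mu P / phi_poly lam mu R"

text \<open>The derivation d/dt on Laurent series in s_mu.\<close>

definition dt :: "nat option \<Rightarrow> 'a::field fls \<Rightarrow> 'a fls" where
  "dt mu F = (case mu of Some i \<Rightarrow> fls_deriv F | None \<Rightarrow> - (fls_X ^ 2 * fls_deriv F))"

text \<open>phi_mu(Pr_lambda(F)) for F a Laurent series in s_lambda.  At lambda_j the principal part
  sum_{l<0} a_l s^l is the rational function sum_{k\<ge>1} a_{-k} (t - lambda_j)^{-k}; at infinity
  it is the polynomial sum_{k\<ge>0} a_{-k} t^k.\<close>

definition Pr_at :: "(nat \<Rightarrow> 'a::field) \<Rightarrow> nat option \<Rightarrow> 'a fls \<Rightarrow> nat option \<Rightarrow> 'a fls" where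
  "Pr_at lam la F mu = (case la of
      Some j \<Rightarrow> (\<Sum>k\<le>degree (fls_prpart F).
                  fls_const (coeff (fls_prpart F) k) * (inverse (phi_poly lam mu [:- lam j, 1:])) ^ k)
    | None \<Rightarrow> phi_poly lam mu (fls_prpart F + [:(fls_nth F 0):]))"

text \<open>The B_K^dagger-module action on B_c, for a rational function f = P/R with poles in Lambda:
  (f . G)^mu = phi_mu(f) G^mu - sum_lambda phi_mu(Pr_lambda(phi_lambda(f) G^lambda)).\<close>

definition rat_act :: "nat \<Rightarrow> (nat \<Rightarrow> 'a::field) \<Rightarrow> 'a poly \<Rightarrow> 'a poly
                        \<Rightarrow> (nat option \<Rightarrow> 'a fps) \<Rightarrow> nat option \<Rightarrow> 'a fls" where
  "rat_act n lam P R G mu =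
     phi_rat lam mu P R * fps_to_fls (G mu)
     - (\<Sum>la\<in>pts n. Pr_at lam la (phi_rat lam la P R * fps_to_fls (G la)) mu)"

definition conv_open_disc :: "('a \<Rightarrow> real) \<Rightarrow> 'a fps \<Rightarrow> bool" where
  "conv_open_disc nv G \<longleftrightarrow> (\<forall>eta::real. 0 \<le> eta \<and> eta < 1 \<longrightarrow>
      (\<lambda>l. nv (fps_nth G l) * eta ^ l) \<longlonglongrightarrow> 0)"

definition in_Bc :: "nat \<Rightarrow> ('a::zero \<Rightarrow> real) \<Rightarrow> (nat option \<Rightarrow> 'a fps) \<Rightarrow> bool" where
  "in_Bc n nv G \<longleftrightarrow> (\<forall>la\<in>pts n. conv_open_disc nv (G la)) \<and> fps_nth (G None) 0 = 0"

text \<open>m = 1 (x) G0 + Y (x) G1 lies in M_c.\<close>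

definition in_Mc :: "nat \<Rightarrow> ('a::zero \<Rightarrow> real) \<Rightarrow> (nat option \<Rightarrow> 'a fps) \<Rightarrow> (nat option \<Rightarrow> 'a fps) \<Rightarrow> bool" where
  "in_Mc n nv G0 G1 \<longleftrightarrow> in_Bc n nv G0 \<and> in_Bc n nv G1"

text \<open>m lies in H = ker nabla_c, where
  nabla_c(m) = 1 (x) dt G0 + Y (x) (dt G1 + h . G1), h = Q'/(2Q).\<close>

definition in_H :: "nat \<Rightarrow> ('a::field \<Rightarrow> real) \<Rightarrow> (nat \<Rightarrow> 'a) \<Rightarrow> (nat option \<Rightarrow> 'a fps) \<Rightarrow> (nat option \<Rightarrow> 'a fps) \<Rightarrow> bool" where
  "in_H n nv lam G0 G1 \<longleftrightarrow> in_Mc n nv G0 G1 \<and>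
     (\<forall>mu\<in>pts n. dt mu (fps_to_fls (G0 mu)) = 0 \<and>
        dt mu (fps_to_fls (G1 mu))
          + rat_act n lam (pderiv (Qpoly n lam)) (2 * Qpoly n lam) G1 mu = 0)"

end

theory Submission
  imports Defs
begin

(*
  The equation for G0 says dG0/dt = 0, so each G0^lambda is a constant
  series.  For G1 we work locally at each point of Lambda with the local parameter s.
  First, the right-hand side is made explicit: h has at most a simple pole at each lambda_i,
  so the only principal parts are a_j/(t - lambda_j) with a_j = Res_{lambda_j}(h G1), and the
  principal part at infinity vanishes.  Then we clear denominators by 2Q.  Near lambda_i one
  has Q = s U(s) with U integral and U(0) a unit; near infinity Q = s^(-n) R(s) with R integral
  and R(0) = 1.  Writing U = u V^2 resp. R = V^2 (a square root exists since p is odd) and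
  F = V G1, the equation becomes  V (a F + b s F') = P  with P a bounded series and
  (a, b) = (1, 2) resp. (n, -2).  Hence the coefficients (a + b k) F_k of V^(-1) P are
  bounded.  Since n is odd, a + b k is a nonzero integer, whose p-adic absolute value is at
  least 1/|a + b k|; so |F_k| and |G1_k| grow at most linearly in k, which gives
  convergence on the open unit disc.
*)

unbundle no vec_syntax
notation fls_nth (infixl "$$" 75)

section \<open>The absolute value of K\<close>

locale witt_abs =
  fixes p :: nat and nv :: "'a::field_char_0 \<Rightarrow> real"
  assumes K: "padic_Witt_field p nv"
begin

lemma prime_p: "prime p" and odd_p: "odd p" and nv_nonneg: "nv x \<ge> 0"
  and nv_zero_iff: "nv x = 0 \<longleftrightarrow> x = 0" and nv_mult: "nv (x * y) = nv x * nv y"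
  and nv_ultra: "nv (x + y) \<le> max (nv x) (nv y)" and nv_p: "nv (of_nat p) = 1 / real p"
  using K unfolding padic_Witt_field_def by auto

lemma nv_zero [simp]: "nv 0 = 0"
  using nv_zero_iff by simp

lemma nv_one [simp]: "nv 1 = 1"
proof -
  have "nv 1 = nv 1 * nv 1" using nv_mult[of 1 1] by simp
  moreover have "nv 1 \<noteq> 0" using nv_zero_iff by simp
  ultimately show ?thesis by (metis mult_cancel_left1)
qed

lemma nv_minus [simp]: "nv (- x) = nv x"
proof -
  have "nv (-1) * nv (-1) = 1" using nv_mult[of "-1" "-1"] by simp
  then have "(nv (-1) - 1) * (nv (-1) + 1) = 0" by (simp add: algebra_simps)
  moreover have "nv (-1) + 1 \<noteq> 0" using nv_nonneg[of "-1"] by linarith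
  ultimately have "nv (-1) = 1" by simp
  then show ?thesis using nv_mult[of "-1" x] by simp
qed

lemma nv_diff: "nv (x - y) \<le> max (nv x) (nv y)"
  using nv_ultra[of x "- y"] by simp

lemma nv_add_le: "nv x \<le> B \<Longrightarrow> nv y \<le> B \<Longrightarrow> nv (x + y) \<le> B"
  using nv_ultra[of x y] by linarith

lemma nv_mult_le: "nv x \<le> A \<Longrightarrow> nv y \<le> B \<Longrightarrow> nv (x * y) \<le> A * B"
  by (simp add: nv_mult mult_mono' nv_nonneg)

lemma nv_sum_le:
  assumes "\<And>i. i \<in> S \<Longrightarrow> nv (f i) \<le> B" and "B \<ge> 0"
  shows "nv (sum f S) \<le> B"
  using assms
proof (induction S rule: infinite_finite_induct)
  case (insert x F)
  then show ?case by (simp add: nv_add_le)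
qed auto

lemma nv_inverse: "nv (inverse x) = 1 / nv x"
proof (cases "x = 0")
  case False
  then have "nv (inverse x) * nv x = 1" using nv_mult[of "inverse x" x] by simp
  moreover have "nv x \<noteq> 0" using False nv_zero_iff by simp
  ultimately show ?thesis by (simp add: eq_divide_eq del: inverse_eq_divide)
qed simp

lemma nv_prod: "nv (prod f S) = (\<Prod>i\<in>S. nv (f i))"
  by (induction S rule: infinite_finite_induct) (auto simp: nv_mult)

lemma nv_of_nat_le: "nv (of_nat m) \<le> 1"
  by (induction m) (auto intro: nv_add_le)

lemma nv_of_int_le: "nv (of_int m) \<le> 1"
  by (cases m rule: int_cases2) (auto simp: nv_of_nat_le)

text \<open>Integers prime to p are units: from a Bezout relation u p + v m = 1 and |p| < 1.\<close>

lemma nv_coprime: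
  assumes "\<not> p dvd m"
  shows "nv (of_nat m) = 1"
proof (rule ccontr)
  assume "nv (of_nat m) \<noteq> 1"
  then have m_small: "nv (of_nat m :: 'a) < 1" using nv_of_nat_le[of m] by simp
  have "coprime (int p) (int m)" using assms prime_p by (simp add: prime_imp_coprime)
  then have "gcd (int p) (int m) = 1" by simp
  then obtain u v :: int where "u * int p + v * int m = 1"
    using bezout_int[of "int p" "int m"] by metis
  then have bezout: "(1::'a) = of_int u * of_nat p + of_int v * of_nat m"
    by (metis of_int_1 of_int_add of_int_mult of_int_of_nat_eq)
  have p_small: "nv (of_nat p :: 'a) < 1" using nv_p prime_gt_1_nat[OF prime_p] by simp
  have small: "nv (of_int w * x :: 'a) < 1" if "nv x < 1" for w x
  proof -
    have "nv (of_int w :: 'a) * nv x \<le> nv x"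
      by (rule mult_left_le_one_le[OF nv_nonneg nv_nonneg nv_of_int_le])
    with that show ?thesis by (simp add: nv_mult)
  qed
  have "nv (of_int u * of_nat p :: 'a) < 1" "nv (of_int v * of_nat m :: 'a) < 1"
    using small p_small m_small by auto
  moreover have "nv (1::'a) \<le> max (nv (of_int u * of_nat p :: 'a)) (nv (of_int v * of_nat m))"
    by (subst bezout) (rule nv_ultra)
  ultimately show False by simp
qed

lemma nv_two: "nv (2::'a) = 1"
proof -
  have "\<not> p dvd 2"
  proof
    assume "p dvd 2"
    then have "p \<le> 2" by (simp add: dvd_imp_le)
    then have "p = 2" using prime_gt_1_nat[OF prime_p] by simp
    then show False using odd_p by simp
  qed
  then show ?thesis using nv_coprime[of 2] by simp
qed

text \<open>The key arithmetic input: a nonzero integer m satisfies |m| \<ge> 1/m, since its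
  p-adic valuation is at most log_p m.\<close>

lemma nv_of_nat_ge: "m > 0 \<Longrightarrow> nv (of_nat m :: 'a) \<ge> 1 / real m"
proof (induction m rule: less_induct)
  case (less m)
  show ?case
  proof (cases "p dvd m")
    case True
    then obtain k where k: "m = p * k" by blast
    with less.prems have k_pos: "k > 0" by simp
    have "k < m" using k k_pos prime_gt_1_nat[OF prime_p] by simp
    then have "1 / real k \<le> nv (of_nat k :: 'a)" using less.IH k_pos by blast
    then have "(1 / real p) * (1 / real k) \<le> (1 / real p) * nv (of_nat k :: 'a)"
      by (intro mult_left_mono) auto
    then show ?thesis by (simp add: k nv_mult nv_p)
  next
    case False
    then show ?thesis using nv_coprime less.prems by simp
  qed
qed

lemma nv_of_int_ge: "m \<noteq> 0 \<Longrightarrow> nv (of_int m :: 'a) \<ge> 1 / real_of_int \<bar>m\<bar>"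
proof -
  assume "m \<noteq> 0"
  moreover have "nv (of_int m :: 'a) = nv (of_nat (nat \<bar>m\<bar>) :: 'a)"
    by (cases m rule: int_cases2) auto
  ultimately show ?thesis using nv_of_nat_ge[of "nat \<bar>m\<bar>"] by simp
qed

lemma nv_le_times_int:
  assumes c: "c \<noteq> 0" and bound: "nv (of_int c * x) \<le> C"
  shows "nv x \<le> C * real_of_int \<bar>c\<bar>"
proof -
  have c_ge: "nv (of_int c :: 'a) \<ge> 1 / real_of_int \<bar>c\<bar>" using nv_of_int_ge[OF c] .
  have c_abs: "real_of_int \<bar>c\<bar> > 0" using c by simp
  then have "nv (of_int c :: 'a) > 0" using c_ge by (smt (verit) divide_pos_pos)
  then have "1 / real_of_int \<bar>c\<bar> * nv x \<le> C"
    using bound c_ge nv_nonneg[of x] by (smt (verit) mult_right_mono nv_mult)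
  then show ?thesis using c_abs by (simp add: field_simps)
qed

end

section \<open>Integral and bounded power series\<close>

context witt_abs
begin

definition integ :: "'a fps \<Rightarrow> bool" where
  "integ f \<longleftrightarrow> (\<forall>k. nv (f $ k) \<le> 1)"

definition bnd :: "'a fps \<Rightarrow> bool" where
  "bnd f \<longleftrightarrow> (\<exists>C. \<forall>k. nv (f $ k) \<le> C)"

lemma fps_mult_nv_le:
  assumes "\<And>i. nv (f $ i) \<le> A" and "\<And>i. nv (g $ i) \<le> B"
  shows "nv ((f * g) $ k) \<le> A * B"
proof -
  have "A \<ge> 0" "B \<ge> 0" using assms(1)[of 0] assms(2)[of 0] nv_nonneg[of "f $ 0"] nv_nonneg[of "g $ 0"]
    by linarith+
  then show ?thesis unfolding fps_mult_nth
    by (intro nv_sum_le) (auto intro!: nv_mult_le assms)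
qed

lemma integ_mult: "integ f \<Longrightarrow> integ g \<Longrightarrow> integ (f * g)"
  unfolding integ_def using fps_mult_nv_le[of f 1 g 1] by simp

lemma integ_add: "integ f \<Longrightarrow> integ g \<Longrightarrow> integ (f + g)"
  unfolding integ_def by (simp add: nv_add_le)

lemma integ_diff: "integ f \<Longrightarrow> integ g \<Longrightarrow> integ (f - g)"
  unfolding integ_def by (metis fps_sub_nth nv_add_le nv_minus diff_conv_add_uminus)

lemma integ_one: "integ 1"
  unfolding integ_def by (simp add: fps_one_nth)

lemma integ_X: "integ fps_X"
  unfolding integ_def by (simp add: fps_X_def)

lemma integ_const: "nv c \<le> 1 \<Longrightarrow> integ (fps_const c)"
  unfolding integ_def by simp

lemma integ_prod: "(\<And>i. i \<in> S \<Longrightarrow> integ (f i)) \<Longrightarrow> integ (prod f S)"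
  by (induction S rule: infinite_finite_induct) (auto intro: integ_mult integ_one)

lemma bnd_integ: "integ f \<Longrightarrow> bnd f"
  unfolding integ_def bnd_def by blast

lemma bnd_add:
  assumes "bnd f" and "bnd g"
  shows "bnd (f + g)"
proof -
  obtain A B where fA: "\<And>k. nv (f $ k) \<le> A" and gB: "\<And>k. nv (g $ k) \<le> B"
    using assms unfolding bnd_def by blast
  have "nv ((f + g) $ k) \<le> max A B" for k
    using nv_add_le[OF max.coboundedI1[OF fA] max.coboundedI2[OF gB]] by simp
  then show ?thesis unfolding bnd_def by blast
qed

lemma bnd_zero: "bnd 0"
  unfolding bnd_def by auto

lemma bnd_sum: "(\<And>i. i \<in> S \<Longrightarrow> bnd (f i)) \<Longrightarrow> bnd (sum f S)"
  by (induction S rule: infinite_finite_induct) (auto intro: bnd_add bnd_zero)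

lemma bnd_const_mult:
  assumes "bnd f"
  shows "bnd (fps_const c * f)"
proof -
  obtain A where "\<And>k. nv (f $ k) \<le> A" using assms unfolding bnd_def by blast
  then have "nv ((fps_const c * f) $ k) \<le> nv c * A" for k
    by (simp add: nv_mult_le)
  then show ?thesis unfolding bnd_def by blast
qed

text \<open>Dividing by a 1-unit V (integral, V(0) = 1) preserves any monotone coefficient
  bound: Y_k = Z_k - sum_{i \<ge> 1} V_i Y_{k-i}.\<close>

lemma div_bound:
  assumes V: "integ V" "V $ 0 = 1" and eq: "V * Y = Z"
    and M: "mono M" and Z: "\<And>k. nv (Z $ k) \<le> M k" and M_nonneg: "\<And>k. M k \<ge> 0"
  shows "nv (Y $ k) \<le> M k"
proof (induction k rule: less_induct)
  case (less k)
  define S where "S = (\<Sum>i=1..k. V $ i * Y $ (k - i))"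
  have "Z $ k = (\<Sum>i=0..k. V $ i * Y $ (k - i))"
    unfolding eq[symmetric] fps_mult_nth by simp
  also have "\<dots> = Y $ k + S"
    using sum.atLeast_Suc_atMost[of 0 k "\<lambda>i. V $ i * Y $ (k - i)"] V(2) by (simp add: S_def)
  finally have Y_eq: "Y $ k = Z $ k - S" by simp
  have "nv S \<le> M k" unfolding S_def
  proof (rule nv_sum_le[OF _ M_nonneg])
    fix i assume i: "i \<in> {1..k}"
    have "nv (Y $ (k - i)) \<le> M (k - i)" using i by (intro less.IH) auto
    also have "\<dots> \<le> M k" using M by (simp add: monoD)
    moreover have "nv (V $ i) \<le> 1" using V(1) unfolding integ_def by blast
    ultimately show "nv (V $ i * Y $ (k - i)) \<le> M k"
      using nv_mult_le[of "V $ i" 1 "Y $ (k - i)" "M k"] by simp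
  qed
  then show ?case using nv_diff[of "Z $ k" S] Z[of k] unfolding Y_eq by linarith
qed

lemma bnd_div:
  assumes V: "integ V" "V $ 0 = 1" and eq: "V * Y = Z" and Z: "bnd Z"
  shows "bnd Y"
proof -
  obtain C where C: "\<And>k. nv (Z $ k) \<le> C" using Z unfolding bnd_def by blast
  then have "C \<ge> 0" using nv_nonneg[of "Z $ 0"] order_trans by blast
  then have "nv (Y $ k) \<le> C" for k
    using div_bound[OF V eq, of "\<lambda>_. C"] C by (simp add: mono_def)
  then show ?thesis unfolding bnd_def by blast
qed

lemma square_nth_Suc:
  fixes V :: "'b::comm_ring_1 fps"
  assumes "V $ 0 = 1"
  shows "(V * V) $ Suc m = 2 * V $ Suc m + (\<Sum>i=1..m. V $ i * V $ (Suc m - i))"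
proof -
  have "(V * V) $ Suc m = V $ 0 * V $ Suc m + (\<Sum>i=1..Suc m. V $ i * V $ (Suc m - i))"
    unfolding fps_mult_nth using sum.atLeast_Suc_atMost[of 0 "Suc m" "\<lambda>i. V $ i * V $ (Suc m - i)"]
    by simp
  then show ?thesis using assms by (simp add: algebra_simps)
qed

text \<open>A 1-unit has an integral square root which is again a 1-unit; this uses |2| = 1.\<close>

lemma sqrt_integ:
  assumes U: "integ U" "U $ 0 = 1"
  shows "\<exists>V. integ V \<and> V $ 0 = 1 \<and> V * V = U"
proof -
  define V where "V = fps_radical (\<lambda>k x. 1) 2 U"
  have V0: "V $ 0 = 1" by (simp add: V_def)
  have "V ^ 2 = U"
    using power_radical[of U "\<lambda>k x. 1" 1] U(2) by (simp add: V_def numeral_2_eq_2)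
  then have VV: "V * V = U" by (simp add: power2_eq_square)
  have "nv (V $ k) \<le> 1" for k
  proof (induction k rule: less_induct)
    case (less k)
    show ?case
    proof (cases k)
      case 0
      then show ?thesis using V0 by simp
    next
      case (Suc m)
      define S where "S = (\<Sum>i=1..m. V $ i * V $ (k - i))"
      have "2 * V $ k = U $ k - S"
        using square_nth_Suc[OF V0, of m] VV by (simp add: Suc S_def)
      moreover have "nv S \<le> 1" unfolding S_def
      proof (rule nv_sum_le)
        fix i assume i: "i \<in> {1..m}"
        then have "nv (V $ i) \<le> 1" "nv (V $ (k - i)) \<le> 1"
          using Suc by (auto intro: less.IH)
        then show "nv (V $ i * V $ (k - i)) \<le> 1" using nv_mult_le[of "V $ i" 1 "V $ (k - i)" 1] by simp
      qed simp
      moreover have "nv (U $ k) \<le> 1" using U(1) unfolding integ_def by simp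
      ultimately have "nv (2 * V $ k) \<le> 1" using nv_diff[of "U $ k" S] by simp
      then show ?thesis by (simp add: nv_mult nv_two)
    qed
  qed
  then show ?thesis using V0 VV unfolding integ_def by blast
qed

end

section \<open>A convergence criterion\<close>

context witt_abs
begin

lemma conv_from_linear_bound:
  assumes C: "\<And>k. nv (G $ k) \<le> C * (A * real k + B)"
  shows "conv_open_disc nv G"
  unfolding conv_open_disc_def
proof (intro allI impI)
  fix eta :: real assume eta: "0 \<le> eta \<and> eta < 1"
  have l1: "(\<lambda>k. real k * eta ^ k) \<longlonglongrightarrow> 0" using powser_times_n_limit_0[of eta] eta by simp
  have l2: "(\<lambda>k. eta ^ k) \<longlonglongrightarrow> 0" using eta by (intro LIMSEQ_power_zero) simp
  have "(\<lambda>k. C * (A * (real k * eta ^ k) + B * eta ^ k)) \<longlonglongrightarrow> C * (A * 0 + B * 0)"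
    by (intro tendsto_intros l1 l2)
  then have lim: "(\<lambda>k. C * (A * real k + B) * eta ^ k) \<longlonglongrightarrow> 0"
    by (simp add: algebra_simps)
  show "(\<lambda>k. nv (G $ k) * eta ^ k) \<longlonglongrightarrow> 0"
  proof (rule Lim_null_comparison[OF _ lim])
    show "\<forall>\<^sub>F k in sequentially. norm (nv (G $ k) * eta ^ k) \<le> C * (A * real k + B) * eta ^ k"
      using C eta nv_nonneg by (auto intro!: always_eventually mult_right_mono)
  qed
qed

text \<open>Indeed (a + b k) F_k is bounded, so |F_k| \<le> C |a + b k| by the bound
  |m| \<ge> 1/|m| on integers, and dividing by V keeps this linear bound.\<close>

lemma conv_of_euler_equation:
  fixes a b :: int
  assumes V: "integ V" "V $ 0 = 1"
    and eq: "V * (of_int a * (V * G) + of_int b * (fps_X * fps_deriv (V * G))) = P"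
    and P: "bnd P" and nonzero: "\<And>k. a + b * int k \<noteq> 0"
  shows "conv_open_disc nv G"
proof -
  define F where "F = V * G"
  define R where "R = of_int a * F + of_int b * (fps_X * fps_deriv F)"
  have R_nth: "R $ k = of_int (a + b * int k) * F $ k" for k
    by (cases k) (simp_all add: R_def algebra_simps)
  have "V * R = P" using eq by (simp add: R_def F_def)
  then obtain C where C: "\<And>k. nv (R $ k) \<le> C"
    using bnd_div[OF V _ P] unfolding bnd_def by blast
  have C_nonneg: "C \<ge> 0" using C[of 0] nv_nonneg[of "R $ 0"] by linarith
  define M where "M k = C * (real_of_int \<bar>b\<bar> * real k + real_of_int \<bar>a\<bar>)" for k
  have F_bound: "nv (F $ k) \<le> M k" for k
  proof -
    have "nv (F $ k) \<le> C * \<bar>real_of_int a + real_of_int b * real k\<bar>"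
      using nv_le_times_int[OF nonzero[of k], of "F $ k" C] C[of k] by (simp add: R_nth)
    also have "\<dots> \<le> M k"
      using abs_triangle_ineq[of "real_of_int a" "real_of_int b * real k"] C_nonneg
      unfolding M_def by (intro mult_left_mono) (simp_all add: abs_mult)
    finally show ?thesis .
  qed
  have "nv (G $ k) \<le> M k" for k
  proof (rule div_bound[OF V F_def[symmetric] _ F_bound])
    show "mono M" unfolding M_def using C_nonneg by (intro monoI mult_left_mono) (auto intro: mult_left_mono)
    show "M k \<ge> 0" for k unfolding M_def using C_nonneg by simp
  qed
  then show ?thesis unfolding M_def by (rule conv_from_linear_bound)
qed

end

section \<open>Expansions as evaluation of polynomials\<close>

text \<open>The expansion
  phi_mu of a polynomial in t is evaluation at the series x_mu representing t, namely
  lambda_i + s at lambda_i and 1/s at infinity.\<close>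

definition ev :: "'a::field fls \<Rightarrow> 'a poly \<Rightarrow> 'a fls" where
  "ev x P = poly (map_poly fls_const P) x"

definition xpt :: "(nat \<Rightarrow> 'a::field) \<Rightarrow> nat option \<Rightarrow> 'a fls" where
  "xpt lam mu = (case mu of Some i \<Rightarrow> fls_const (lam i) + fls_X | None \<Rightarrow> fls_X_inv)"

lemma ev_0 [simp]: "ev x 0 = 0"
  by (simp add: ev_def)

lemma ev_pCons: "ev x (pCons a P) = fls_const a + x * ev x P"
  by (cases "a = 0 \<and> P = 0") (auto simp: ev_def map_poly_pCons)

lemma ev_add: "ev x (P + Q) = ev x P + ev x Q"
proof (induction P arbitrary: Q)
  case (pCons a P)
  then show ?case
    by (cases Q) (simp add: ev_pCons distrib_left add_ac flip: fls_plus_const)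
qed simp

lemma ev_smult: "ev x (smult a P) = fls_const a * ev x P"
  by (induction P) (simp_all add: ev_pCons algebra_simps)

lemma ev_mult: "ev x (P * Q) = ev x P * ev x Q"
  by (induction P) (simp_all add: ev_pCons ev_add ev_smult algebra_simps)

lemma ev_prod: "ev x (prod f S) = (\<Prod>i\<in>S. ev x (f i))"
  by (induction S rule: infinite_finite_induct) (simp_all add: ev_mult one_pCons ev_pCons)

lemma ev_two: "ev x (2 * P) = 2 * ev x P"
proof -
  have "(2::'a poly) = 1 + 1" by simp
  then have "ev x 2 = 2" using ev_add[of x 1 1] by (simp add: one_pCons ev_pCons)
  then show ?thesis by (simp add: ev_mult)
qed

lemma ev_lin: "ev x [:- c, 1:] = x - fls_const c"
  by (simp add: ev_pCons)

lemma ev_deriv: "fls_deriv (ev x P) = ev x (pderiv P) * fls_deriv x"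
  by (induction P) (simp_all add: ev_pCons pderiv_pCons ev_add algebra_simps)

lemma phi_poly_ev: "phi_poly lam mu P = ev (xpt lam mu) P"
proof (cases mu)
  case None
  have "ev fls_X_inv P = (\<Sum>k\<le>degree P. fls_const (coeff P k) * fls_X_inv ^ k)"
    unfolding ev_def poly_altdef by (simp add: degree_map_poly coeff_map_poly)
  then show ?thesis using None by (simp add: phi_poly_def xpt_def fls_X_inv_power_conv_shift_1)
next
  case (Some i)
  have "fps_to_fls (fps_of_poly (pcompose P [:lam i, 1:])) = ev (fls_const (lam i) + fls_X) P"
  proof (induction P)
    case (pCons a P)
    have "fps_of_poly [:lam i, 1:] = fps_const (lam i) + fps_X"
      by (simp add: fps_of_poly_pCons fps_of_poly_const)
    then have h: "fps_of_poly (pcompose (pCons a P) [:lam i, 1:]) =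
        fps_const a + (fps_const (lam i) + fps_X) * fps_of_poly (pcompose P [:lam i, 1:])"
      by (simp only: pcompose_pCons fps_of_poly_add fps_of_poly_mult fps_of_poly_const)
    show ?case unfolding h fps_to_fls_plus fls_times_fps_to_fls pCons.IH by (simp add: ev_pCons)
  qed simp
  then show ?thesis using Some by (simp add: phi_poly_def xpt_def)
qed

text \<open>d/dt commutes with evaluation: at infinity d(1/s)/ds = -1/s^2 cancels the factor
  -s^2 in the definition of d/dt.\<close>

lemma dt_ev: "dt mu (ev (xpt lam mu) P) = ev (xpt lam mu) (pderiv P)"
proof (cases mu)
  case None
  have "dt mu (ev (xpt lam mu) P) = ev fls_X_inv (pderiv P) * (fls_X * fls_X_inv)\<^sup>2"
    using None by (simp add: dt_def xpt_def ev_deriv algebra_simps power2_eq_square)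
  then show ?thesis using None by (simp add: fls_X_inv_times_conv_shift xpt_def)
qed (simp add: dt_def xpt_def ev_deriv)

lemma phi_rat_log_deriv:
  "phi_rat lam mu (pderiv Q) (2 * Q) = dt mu (ev (xpt lam mu) Q) / (2 * ev (xpt lam mu) Q)"
  by (simp add: phi_rat_def phi_poly_ev dt_ev ev_two)

section \<open>Principal parts\<close>

lemma Pr_at_infinity_zero:
  assumes "fls_prpart F = 0" and "F $$ 0 = 0"
  shows "Pr_at lam None F mu = 0"
  using assms by (simp add: Pr_at_def phi_poly_ev)

lemma Pr_at_simple_pole:
  fixes F :: "'a::field fls"
  assumes simple: "\<And>k. k \<ge> 2 \<Longrightarrow> F $$ (- int k) = 0"
  shows "Pr_at lam (Some j) F mu = fls_const (F $$ -1) * inverse (phi_poly lam mu [:- lam j, 1:])"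
proof -
  define P where "P = fls_prpart F"
  have "degree P \<le> 1" unfolding P_def by (rule degree_le) (auto intro: simple)
  moreover have "coeff P 0 = 0" "coeff P 1 = F $$ -1" by (simp_all add: P_def)
  ultimately show ?thesis
    by (cases "degree P") (auto simp: Pr_at_def P_def[symmetric] coeff_eq_0)
qed

lemma pts_sum: "(\<Sum>la\<in>pts n. f la) = f None + (\<Sum>j<n. f (Some j))"
  unfolding pts_def by (simp add: sum.reindex)

lemma sum_Pr_at_partial_fractions:
  fixes F :: "nat option \<Rightarrow> 'a::field fls"
  assumes "fls_prpart (F None) = 0" "F None $$ 0 = 0"
    and "\<And>j k. j < n \<Longrightarrow> k \<ge> 2 \<Longrightarrow> F (Some j) $$ (- int k) = 0"
  shows "(\<Sum>la\<in>pts n. Pr_at lam la (F la) mu)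
       = (\<Sum>j<n. fls_const (F (Some j) $$ -1) * inverse (ev (xpt lam mu) [:- lam j, 1:]))"
  using assms unfolding pts_sum Pr_at_infinity_zero[OF assms(1,2)]
  by (auto intro!: sum.cong simp: Pr_at_simple_pole phi_poly_ev)

lemma ev_Qpoly: "ev x (Qpoly n lam) = (\<Prod>j<n. ev x [:- lam j, 1:])"
  by (simp add: Qpoly_def ev_prod)

lemma two_Q_times_partial_fractions:
  fixes x :: "'a::field fls"
  assumes nz: "\<And>j. j < n \<Longrightarrow> ev x [:- lam j, 1:] \<noteq> 0"
  shows "2 * ev x (Qpoly n lam) * (\<Sum>j<n. fls_const (a j) * inverse (ev x [:- lam j, 1:]))
       = (\<Sum>j<n. fls_const (2 * a j) * (\<Prod>l\<in>{..<n}-{j}. ev x [:- lam l, 1:]))"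
  unfolding sum_distrib_left
proof (rule sum.cong[OF refl])
  fix j assume j: "j \<in> {..<n}"
  have "ev x (Qpoly n lam) = ev x [:- lam j, 1:] * (\<Prod>l\<in>{..<n}-{j}. ev x [:- lam l, 1:])"
    unfolding ev_Qpoly using j by (simp add: prod.remove)
  moreover have "fls_const (2 * a j) = 2 * fls_const (a j)"
    by (metis fls_const_mult_const fls_const_numeral)
  ultimately show "2 * ev x (Qpoly n lam) * (fls_const (a j) * inverse (ev x [:- lam j, 1:]))
      = fls_const (2 * a j) * (\<Prod>l\<in>{..<n}-{j}. ev x [:- lam l, 1:])"
    using nz[of j] j by (simp add: field_simps)
qed

lemma fps_to_fls_prod: "fps_to_fls (prod f S) = (\<Prod>i\<in>S. fps_to_fls (f i))"
  by (induction S rule: infinite_finite_induct) (simp_all add: fls_times_fps_to_fls)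

lemma fps_to_fls_sum: "fps_to_fls (sum f S) = (\<Sum>i\<in>S. fps_to_fls (f i))"
  by (induction S rule: infinite_finite_induct) simp_all

lemma fps_prod_nth0: "(prod f S) $ 0 = (\<Prod>i\<in>S. f i $ 0)"
  by (induction S rule: infinite_finite_induct) simp_all

section \<open>Local factorisation of Q\<close>

text \<open>Two algebraic identities behind the substitution F = V G: with U = u V^2 the cleared
  equation at a finite point, and with R = V^2 the one at infinity, become
  V (a F + b s F') for (a, b) = (1, 2) resp. (n, -2).\<close>

lemma twist_finite:
  fixes V G :: "'b::comm_ring_1 fps"
  shows "2 * (fps_X * (fps_const u * (V * V))) * fps_deriv G
           + fps_deriv (fps_X * (fps_const u * (V * V))) * G
         = fps_const u * (V * (of_int 1 * (V * G) + of_int 2 * (fps_X * fps_deriv (V * G))))"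
  by (simp add: algebra_simps flip: fps_numeral_fps_const)

lemma twist_infinity:
  fixes V G :: "'b::comm_ring_1 fps"
  shows "(of_nat n * (V * V) - fps_X * fps_deriv (V * V)) * G
           - 2 * (fps_X * ((V * V) * fps_deriv G))
         = V * (of_int (int n) * (V * G) + of_int (- 2) * (fps_X * fps_deriv (V * G)))"
  by (simp add: algebra_simps flip: fps_numeral_fps_const)

locale branch_points = witt_abs p nv for p :: nat and nv :: "'a::field_char_0 \<Rightarrow> real" +
  fixes n :: nat and lam :: "nat \<Rightarrow> 'a"
  assumes lam_int: "\<And>i. i < n \<Longrightarrow> nv (lam i) \<le> 1"
    and lam_dist: "\<And>i j. i < n \<Longrightarrow> j < n \<Longrightarrow> i \<noteq> j \<Longrightarrow> \<not> nv (lam i - lam j) < 1"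
begin

lemma nv_lam_diff_le: "i < n \<Longrightarrow> j < n \<Longrightarrow> nv (lam i - lam j) \<le> 1"
  using nv_diff[of "lam i" "lam j"] lam_int[of i] lam_int[of j] by simp

lemma nv_lam_diff: "i < n \<Longrightarrow> j < n \<Longrightarrow> i \<noteq> j \<Longrightarrow> nv (lam i - lam j) = 1"
  using nv_lam_diff_le lam_dist by force

text \<open>At lambda_i, the factor t - lambda_j becomes (lambda_i - lambda_j) + s, and
  Q = s U_i(s) where U_i is integral with unit constant term.\<close>

definition ell :: "nat \<Rightarrow> nat \<Rightarrow> 'a fps" where
  "ell i j = fps_const (lam i - lam j) + fps_X"

definition U :: "nat \<Rightarrow> 'a fps" where
  "U i = (\<Prod>j\<in>{..<n}-{i}. ell i j)"

lemma ev_factor_finite: "ev (xpt lam (Some i)) [:- lam j, 1:] = fps_to_fls (ell i j)"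
proof -
  have "fls_const (lam i) - fls_const (lam j) = fls_const (lam i - lam j)"
    by (metis fls_plus_const fls_const_uminus diff_conv_add_uminus)
  then show ?thesis by (simp add: ev_lin xpt_def ell_def algebra_simps)
qed

lemma ell_integ: "i < n \<Longrightarrow> j < n \<Longrightarrow> integ (ell i j)"
  unfolding ell_def by (intro integ_add integ_const integ_X nv_lam_diff_le)

lemma ell_nonzero: "ell i j \<noteq> 0"
proof
  assume "ell i j = 0"
  then have "ell i j $ 1 = 0" by simp
  then show False by (simp add: ell_def)
qed

lemma ev_Qpoly_finite:
  assumes "i < n"
  shows "ev (xpt lam (Some i)) (Qpoly n lam) = fps_to_fls (fps_X * U i)"
proof -
  have "ev (xpt lam (Some i)) (Qpoly n lam) = fps_to_fls (\<Prod>j<n. ell i j)"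
    by (simp add: ev_Qpoly ev_factor_finite fps_to_fls_prod)
  also have "(\<Prod>j<n. ell i j) = ell i i * U i"
    unfolding U_def using assms by (simp add: prod.remove)
  finally show ?thesis by (simp add: ell_def)
qed

lemma U_integ: "i < n \<Longrightarrow> integ (U i)"
  unfolding U_def by (intro integ_prod ell_integ) auto

lemma nv_U_0: "i < n \<Longrightarrow> nv (U i $ 0) = 1"
  unfolding U_def fps_prod_nth0 nv_prod by (intro prod.neutral) (auto simp: ell_def nv_lam_diff)

lemma U_nonzero: "i < n \<Longrightarrow> U i \<noteq> 0"
  using nv_U_0[of i] by auto

text \<open>At infinity, t - lambda_j = s^(-1) (1 - lambda_j s), so Q = s^(-n) R(s) with R integral
  and R(0) = 1.\<close>

definition r :: "nat \<Rightarrow> 'a fps" where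
  "r j = 1 - fps_const (lam j) * fps_X"

definition R :: "'a fps" where
  "R = (\<Prod>j<n. r j)"

lemma ev_factor_infinity: "ev (xpt lam None) [:- lam j, 1:] = fls_X_inv * fps_to_fls (r j)"
proof -
  have "fls_X_inv * fps_to_fls (r j) = fls_X_inv - fls_const (lam j) * (fls_X_inv * fls_X)"
    by (simp add: r_def fls_times_fps_to_fls algebra_simps)
  then show ?thesis by (simp add: ev_lin xpt_def fls_X_inv_times_conv_shift)
qed

lemma r_nonzero: "r j \<noteq> 0"
proof
  assume "r j = 0"
  then have "r j $ 0 = 0" by simp
  then show False by (simp add: r_def)
qed

lemma R_integ: "integ R"
  unfolding R_def r_def by (intro integ_prod integ_diff integ_one integ_mult integ_const integ_X lam_int) auto

lemma R_0: "R $ 0 = 1"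
  unfolding R_def fps_prod_nth0 by (simp add: r_def)

lemma ev_Qpoly_infinity: "ev (xpt lam None) (Qpoly n lam) = fls_X_inv ^ n * fps_to_fls R"
  by (simp add: ev_Qpoly ev_factor_infinity prod.distrib R_def fps_to_fls_prod)

lemma X_pow_times_X_inv_pow: "(fls_X :: 'b::field fls) ^ m * fls_X_inv ^ m = 1"
  by (simp add: power_mult_distrib[symmetric] fls_X_inv_times_conv_shift)

lemma X_pow_ev_Qpoly_infinity: "fls_X ^ n * ev (xpt lam None) (Qpoly n lam) = fps_to_fls R"
  unfolding ev_Qpoly_infinity mult.assoc[symmetric] X_pow_times_X_inv_pow by simp

lemma X_pow_dt_ev_Qpoly_infinity:
  "fls_X ^ n * dt None (ev (xpt lam None) (Qpoly n lam))
     = fps_to_fls (fps_X * (of_nat n * R - fps_X * fps_deriv R))"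
proof -
  have "fls_X ^ n * dt None (ev (xpt lam None) (Qpoly n lam))
      = of_nat n * (fls_X * (fls_X ^ Suc n * fls_X_inv ^ Suc n)) * fps_to_fls R
        - fls_X * fls_X * (fls_X ^ n * fls_X_inv ^ n) * fps_to_fls (fps_deriv R)"
    unfolding ev_Qpoly_infinity dt_def
    by (simp add: fls_deriv_X_inv_power fls_deriv_fps_to_fls algebra_simps power2_eq_square)
  then show ?thesis
    by (simp only: X_pow_times_X_inv_pow) (simp add: fls_times_fps_to_fls algebra_simps)
qed

lemma ev_Qpoly_infinity_nonzero: "ev (xpt lam None) (Qpoly n lam) \<noteq> 0"
  unfolding ev_Qpoly_infinity using R_0 by auto

end

section \<open>The equation near a finite branch point\<close>

context branch_points
begin

text \<open>Since Q has a simple zero at lambda_i, h G1 has at most a simple pole there.\<close>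

lemma finite_simple_pole:
  assumes i: "i < n" and k: "k \<ge> 2"
  shows "(phi_rat lam (Some i) (pderiv (Qpoly n lam)) (2 * Qpoly n lam) * fps_to_fls G) $$ (- int k) = 0"
proof -
  define Y where "Y = fps_to_fls (fps_X * U i)"
  define E where "E = phi_rat lam (Some i) (pderiv (Qpoly n lam)) (2 * Qpoly n lam) * fps_to_fls G"
  have Y_nz: "Y \<noteq> 0" using U_nonzero[OF i] by (simp add: Y_def)
  have "phi_rat lam (Some i) (pderiv (Qpoly n lam)) (2 * Qpoly n lam) = fls_deriv Y / (2 * Y)"
    using phi_rat_log_deriv[of lam "Some i" "Qpoly n lam"] ev_Qpoly_finite[OF i]
    by (simp add: dt_def Y_def)
  then have cleared: "(2 * Y) * E = fps_to_fls (fps_deriv (fps_X * U i) * G)"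
    unfolding E_def using Y_nz
    by (simp add: field_simps Y_def fls_deriv_fps_to_fls fls_times_fps_to_fls)
  have "fls_subdegree Y = 1"
  proof -
    have "subdegree (fps_X * U i) = 1"
      using U_nonzero[OF i] nv_U_0[OF i]
      by (subst fps_subdegree_mult_fps_X) (auto simp: subdegree_eq_0_iff)
    then show ?thesis by (simp add: Y_def fls_subdegree_fls_to_fps)
  qed
  then have "fls_subdegree E \<ge> -1" if E_nz: "E \<noteq> 0"
  proof -
    have "fls_subdegree ((2 * Y) * E) = 1 + fls_subdegree E"
      using E_nz Y_nz \<open>fls_subdegree Y = 1\<close> by simp
    moreover have "fls_subdegree ((2 * Y) * E) \<ge> 0"
      unfolding cleared by (simp add: fls_subdegree_fls_to_fps)
    ultimately show ?thesis by simp
  qed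
  then have "E $$ (- int k) = 0"
    using k by (cases "E = 0") (auto intro: fls_eq0_below_subdegree)
  then show ?thesis by (simp add: E_def)
qed

lemma finite_cleared_equation:
  assumes i: "i < n"
    and eq: "fls_deriv (fps_to_fls G)
        + phi_rat lam (Some i) (pderiv (Qpoly n lam)) (2 * Qpoly n lam) * fps_to_fls G
        = (\<Sum>j<n. fls_const (a j) * inverse (ev (xpt lam (Some i)) [:- lam j, 1:]))"
  shows "2 * (fps_X * U i) * fps_deriv G + fps_deriv (fps_X * U i) * G
       = (\<Sum>j<n. fps_const (2 * a j) * (\<Prod>l\<in>{..<n}-{j}. ell i l))"
proof -
  define Y where "Y = fps_to_fls (fps_X * U i)"
  have Q_eq: "ev (xpt lam (Some i)) (Qpoly n lam) = Y" using ev_Qpoly_finite[OF i] by (simp add: Y_def)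
  have Y_nz: "Y \<noteq> 0" using U_nonzero[OF i] by (simp add: Y_def)
  have h: "phi_rat lam (Some i) (pderiv (Qpoly n lam)) (2 * Qpoly n lam) = fls_deriv Y / (2 * Y)"
    using phi_rat_log_deriv[of lam "Some i" "Qpoly n lam"] Q_eq by (simp add: dt_def)
  have "2 * Y * (\<Sum>j<n. fls_const (a j) * inverse (ev (xpt lam (Some i)) [:- lam j, 1:]))
      = fps_to_fls (\<Sum>j<n. fps_const (2 * a j) * (\<Prod>l\<in>{..<n}-{j}. ell i l))"
    unfolding Q_eq[symmetric]
    by (subst two_Q_times_partial_fractions)
      (auto simp: ev_factor_finite ell_nonzero fps_to_fls_sum fps_to_fls_prod fls_times_fps_to_fls)
  moreover have "2 * Y * (fls_deriv (fps_to_fls G) + fls_deriv Y / (2 * Y) * fps_to_fls G)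
      = fps_to_fls (2 * (fps_X * U i) * fps_deriv G + fps_deriv (fps_X * U i) * G)"
  proof -
    define dY where "dY = fls_deriv Y"
    have "2 * Y * (fls_deriv (fps_to_fls G) + dY / (2 * Y) * fps_to_fls G)
        = 2 * Y * fls_deriv (fps_to_fls G) + dY * fps_to_fls G"
      using Y_nz by (simp add: field_simps)
    also have "\<dots> = fps_to_fls (2 * (fps_X * U i) * fps_deriv G + fps_deriv (fps_X * U i) * G)"
      by (simp add: dY_def Y_def fls_deriv_fps_to_fls fls_times_fps_to_fls)
    finally show ?thesis unfolding dY_def .
  qed
  ultimately show ?thesis using eq unfolding h by (simp only: fps_to_fls_eq_iff)
qed

text \<open>Writing U_i = u V^2 and F = V G the equation becomes V (F + 2 s F') = P.\<close>

lemma finite_conv: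
  assumes i: "i < n"
    and eq: "fls_deriv (fps_to_fls G)
        + phi_rat lam (Some i) (pderiv (Qpoly n lam)) (2 * Qpoly n lam) * fps_to_fls G
        = (\<Sum>j<n. fls_const (a j) * inverse (ev (xpt lam (Some i)) [:- lam j, 1:]))"
  shows "conv_open_disc nv G"
proof -
  define u where "u = U i $ 0"
  define P where "P = (\<Sum>j<n. fps_const (2 * a j) * (\<Prod>l\<in>{..<n}-{j}. ell i l))"
  have nv_u: "nv u = 1" using nv_U_0[OF i] by (simp add: u_def)
  then have u_nz: "u \<noteq> 0" by auto
  have "integ (fps_const (inverse u) * U i)"
    using U_integ[OF i] nv_u by (intro integ_mult integ_const) (auto simp: nv_inverse)
  moreover have "(fps_const (inverse u) * U i) $ 0 = 1" using u_nz by (simp add: u_def)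
  ultimately obtain V where V: "integ V" "V $ 0 = 1" "V * V = fps_const (inverse u) * U i"
    using sqrt_integ by blast
  have "U i = fps_const u * (V * V)"
    using V(3) u_nz by (simp add: mult.assoc[symmetric] flip: fps_const_mult)
  then have "fps_const u * (V * (of_int 1 * (V * G) + of_int 2 * (fps_X * fps_deriv (V * G)))) = P"
    (is "fps_const u * ?lhs = P")
    using finite_cleared_equation[OF i eq] twist_finite[of u V G] by (simp add: P_def)
  then have "fps_const (inverse u) * (fps_const u * ?lhs) = fps_const (inverse u) * P" by simp
  moreover have "fps_const (inverse u) * fps_const u = (1 :: 'a fps)"
    using u_nz by (simp flip: fps_const_mult)
  ultimately have "?lhs = fps_const (inverse u) * P" by (metis mult.assoc mult_1)
  moreover have "bnd (fps_const (inverse u) * P)"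
    unfolding P_def by (intro bnd_const_mult bnd_sum bnd_integ integ_prod ell_integ i) auto
  ultimately show ?thesis
    by (rule conv_of_euler_equation[OF V(1,2)]) presburger
qed

end

section \<open>The equation near infinity\<close>

context branch_points
begin

text \<open>At infinity h = n/(2t) + O(t^(-2)) vanishes, so h G1 has no principal part when
  G1 vanishes at infinity.\<close>

lemma infinity_no_principal_part:
  assumes G0: "G $ 0 = 0"
  defines "E \<equiv> phi_rat lam None (pderiv (Qpoly n lam)) (2 * Qpoly n lam) * fps_to_fls G"
  shows "fls_prpart E = 0 \<and> E $$ 0 = 0"
proof -
  define Y where "Y = ev (xpt lam None) (Qpoly n lam)"
  define W where "W = of_nat n * R - fps_X * fps_deriv R"
  have Y_nz: "Y \<noteq> 0" using ev_Qpoly_infinity_nonzero by (simp add: Y_def)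
  have "phi_rat lam None (pderiv (Qpoly n lam)) (2 * Qpoly n lam) = dt None Y / (2 * Y)"
    using phi_rat_log_deriv[of lam None "Qpoly n lam"] by (simp add: Y_def)
  then have "(2 * Y) * E = dt None Y * fps_to_fls G"
    unfolding E_def using Y_nz by (simp add: field_simps)
  then have "fls_X ^ n * ((2 * Y) * E) = (fls_X ^ n * dt None Y) * fps_to_fls G"
    by (simp add: algebra_simps)
  then have cleared: "2 * fps_to_fls R * E = fps_to_fls (fps_X * W) * fps_to_fls G"
    unfolding Y_def X_pow_dt_ev_Qpoly_infinity W_def X_pow_ev_Qpoly_infinity[symmetric]
    by (simp add: algebra_simps)
  have "fls_subdegree E \<ge> 2" if E_nz: "E \<noteq> 0"
  proof -
    have R_nz: "R \<noteq> 0" using R_0 by auto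
    have "fls_subdegree (2 * fps_to_fls R * E) = fls_subdegree E"
      using E_nz R_nz R_0 by (simp add: fls_subdegree_fls_to_fps subdegree_eq_0_iff)
    moreover have nz: "fps_X * W \<noteq> 0" "G \<noteq> 0" using cleared E_nz R_nz by auto
    moreover have "subdegree (fps_X * W) \<noteq> 0" "subdegree G \<noteq> 0"
      using nz G0 by (simp_all add: subdegree_eq_0_iff)
    ultimately show ?thesis using cleared by (simp add: fls_subdegree_fls_to_fps)
  qed
  then show ?thesis by (cases "E = 0") (auto simp: fls_prpart_eq0_iff)
qed

lemma infinity_cleared_partial_fractions:
  assumes n: "n > 0"
  shows "fls_X ^ n * (2 * ev (xpt lam None) (Qpoly n lam)
            * (\<Sum>j<n. fls_const (a j) * inverse (ev (xpt lam None) [:- lam j, 1:])))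
       = fps_to_fls (fps_X * (\<Sum>j<n. fps_const (2 * a j) * (\<Prod>l\<in>{..<n}-{j}. r l)))"
proof -
  obtain m where m: "n = Suc m" using n by (cases n) auto
  have nz: "ev (xpt lam None) [:- lam j, 1:] \<noteq> 0" for j
    by (simp add: ev_factor_infinity r_nonzero)
  have "2 * ev (xpt lam None) (Qpoly n lam)
          * (\<Sum>j<n. fls_const (a j) * inverse (ev (xpt lam None) [:- lam j, 1:]))
      = (\<Sum>j<n. fls_const (2 * a j) * (\<Prod>l\<in>{..<n}-{j}. ev (xpt lam None) [:- lam l, 1:]))"
    by (rule two_Q_times_partial_fractions) (rule nz)
  also have "\<dots> = (\<Sum>j<n. fls_const (2 * a j) * (fls_X_inv ^ m * fps_to_fls (\<Prod>l\<in>{..<n}-{j}. r l)))"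
    by (intro sum.cong refl) (simp add: ev_factor_infinity prod.distrib fps_to_fls_prod m)
  finally have "2 * ev (xpt lam None) (Qpoly n lam)
          * (\<Sum>j<n. fls_const (a j) * inverse (ev (xpt lam None) [:- lam j, 1:]))
      = fls_X_inv ^ m * (\<Sum>j<n. fls_const (2 * a j) * fps_to_fls (\<Prod>l\<in>{..<n}-{j}. r l))"
    by (simp add: sum_distrib_left algebra_simps)
  moreover have "(fls_X :: 'a fls) ^ n * fls_X_inv ^ m = fls_X"
    unfolding m by (simp add: mult.assoc X_pow_times_X_inv_pow)
  ultimately show ?thesis
    by (simp add: fls_times_fps_to_fls fps_to_fls_sum sum_distrib_left mult.assoc[symmetric])
qed

lemma infinity_cleared_equation:
  assumes n: "n > 0"
    and eq: "dt None (fps_to_fls G)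
        + phi_rat lam None (pderiv (Qpoly n lam)) (2 * Qpoly n lam) * fps_to_fls G
        = (\<Sum>j<n. fls_const (a j) * inverse (ev (xpt lam None) [:- lam j, 1:]))"
  shows "(of_nat n * R - fps_X * fps_deriv R) * G - 2 * (fps_X * (R * fps_deriv G))
       = (\<Sum>j<n. fps_const (2 * a j) * (\<Prod>l\<in>{..<n}-{j}. r l))"
proof -
  define Y where "Y = ev (xpt lam None) (Qpoly n lam)"
  define W where "W = of_nat n * R - fps_X * fps_deriv R"
  have Y_nz: "Y \<noteq> 0" using ev_Qpoly_infinity_nonzero by (simp add: Y_def)
  have h: "phi_rat lam None (pderiv (Qpoly n lam)) (2 * Qpoly n lam) = dt None Y / (2 * Y)"
    using phi_rat_log_deriv[of lam None "Qpoly n lam"] by (simp add: Y_def)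
  have "fls_X ^ n * (2 * Y * (dt None (fps_to_fls G) + dt None Y / (2 * Y) * fps_to_fls G))
      = 2 * (fls_X ^ n * Y) * dt None (fps_to_fls G) + (fls_X ^ n * dt None Y) * fps_to_fls G"
    using Y_nz by (simp add: field_simps)
  also have "\<dots> = 2 * fps_to_fls R * (- (fls_X\<^sup>2 * fps_to_fls (fps_deriv G)))
      + fps_to_fls (fps_X * W) * fps_to_fls G"
    unfolding Y_def X_pow_ev_Qpoly_infinity X_pow_dt_ev_Qpoly_infinity W_def
    by (simp add: dt_def fls_deriv_fps_to_fls)
  also have "\<dots> = fps_to_fls (fps_X * (W * G - 2 * (fps_X * (R * fps_deriv G))))"
    by (simp add: fls_times_fps_to_fls algebra_simps power2_eq_square)
  finally have "fps_to_fls (fps_X * (W * G - 2 * (fps_X * (R * fps_deriv G))))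
      = fps_to_fls (fps_X * (\<Sum>j<n. fps_const (2 * a j) * (\<Prod>l\<in>{..<n}-{j}. r l)))"
    using eq infinity_cleared_partial_fractions[OF n, of a] unfolding h Y_def by simp
  then show ?thesis
    unfolding W_def by (simp only: fps_to_fls_eq_iff mult_cancel_left fps_X_neq_zero simp_thms)
qed

text \<open>Writing R = V^2 and F = V G the equation becomes V (n F - 2 s F') = P; the
  coefficients n - 2k never vanish because n is odd.\<close>

lemma infinity_conv:
  assumes odd: "odd n"
    and eq: "dt None (fps_to_fls G)
        + phi_rat lam None (pderiv (Qpoly n lam)) (2 * Qpoly n lam) * fps_to_fls G
        = (\<Sum>j<n. fls_const (a j) * inverse (ev (xpt lam None) [:- lam j, 1:]))"
  shows "conv_open_disc nv G"
proof -
  obtain V where V: "integ V" "V $ 0 = 1" "V * V = R" using sqrt_integ[OF R_integ R_0] by blast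
  have n: "n > 0" using odd by (cases n) auto
  have "V * (of_int (int n) * (V * G) + of_int (- 2) * (fps_X * fps_deriv (V * G)))
      = (\<Sum>j<n. fps_const (2 * a j) * (\<Prod>l\<in>{..<n}-{j}. r l))"
    using infinity_cleared_equation[OF n eq] twist_infinity[of n V G] by (simp add: V(3))
  moreover have "bnd (\<Sum>j<n. fps_const (2 * a j) * (\<Prod>l\<in>{..<n}-{j}. r l))"
    unfolding r_def
    by (intro bnd_sum bnd_const_mult bnd_integ integ_prod integ_diff integ_one integ_mult
        integ_const integ_X lam_int) auto
  ultimately show ?thesis
    by (rule conv_of_euler_equation[OF V(1,2)]) (use odd in presburger)
qed

end

section \<open>Convergence of G1\<close>

context branch_points
begin

definition residue :: "(nat option \<Rightarrow> 'a fps) \<Rightarrow> nat \<Rightarrow> 'a" where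
  "residue G j =
     (phi_rat lam (Some j) (pderiv (Qpoly n lam)) (2 * Qpoly n lam) * fps_to_fls (G (Some j))) $$ -1"

lemma sum_Pr_at_residues:
  assumes G_inf: "G None $ 0 = 0"
  shows "(\<Sum>la\<in>pts n. Pr_at lam la
            (phi_rat lam la (pderiv (Qpoly n lam)) (2 * Qpoly n lam) * fps_to_fls (G la)) mu)
       = (\<Sum>j<n. fls_const (residue G j) * inverse (ev (xpt lam mu) [:- lam j, 1:]))"
  unfolding residue_def
  using infinity_no_principal_part[OF G_inf] finite_simple_pole
  by (intro sum_Pr_at_partial_fractions) auto

lemma G1_conv:
  assumes odd: "odd n" and G_inf: "G None $ 0 = 0" and la: "la \<in> pts n"
    and eq: "dt la (fps_to_fls (G la))
          + phi_rat lam la (pderiv (Qpoly n lam)) (2 * Qpoly n lam) * fps_to_fls (G la)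
        = (\<Sum>la'\<in>pts n. Pr_at lam la'
            (phi_rat lam la' (pderiv (Qpoly n lam)) (2 * Qpoly n lam) * fps_to_fls (G la')) la)"
  shows "conv_open_disc nv (G la)"
proof (cases la)
  case None
  then show ?thesis
    using eq unfolding sum_Pr_at_residues[where G = G, OF G_inf] by (intro infinity_conv[OF odd]) simp
next
  case (Some i)
  then have "i < n" using la by (auto simp: pts_def)
  then show ?thesis
    using eq Some unfolding sum_Pr_at_residues[where G = G, OF G_inf]
    by (intro finite_conv) (simp_all add: dt_def)
qed

end

lemma dt_zero_imp_const:
  assumes "dt la (fps_to_fls G) = (0 :: 'a::field_char_0 fls)"
  shows "G $ Suc k = 0"
proof -
  have "fls_deriv (fps_to_fls G) = 0"
    using assms by (cases la) (simp_all add: dt_def)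
  then have "fps_deriv G = 0" by (simp add: fls_deriv_fps_to_fls)
  from arg_cong[OF this, of "\<lambda>f. f $ k"] show ?thesis by (simp del: of_nat_Suc)
qed

lemma (in witt_abs) const_conv:
  assumes "\<And>k. G $ Suc k = 0"
  shows "conv_open_disc nv G"
proof (rule conv_from_linear_bound[of G "nv (G $ 0)" 0 1])
  show "nv (G $ k) \<le> nv (G $ 0) * (0 * real k + 1)" for k
    using assms by (cases k) (simp_all add: nv_nonneg)
qed

theorem mainTheorem5:
  fixes p :: nat and nv :: "'a::field_char_0 \<Rightarrow> real" and g :: nat
    and lam :: "nat \<Rightarrow> 'a" and G0 G1 :: "nat option \<Rightarrow> 'a fps"
  assumes K: "padic_Witt_field p nv"
    and g: "g \<ge> 1"
    and lam_int: "\<And>i. i < 2*g+1 \<Longrightarrow> nv (lam i) \<le> 1"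
    and lam_dist: "\<And>i j. i < 2*g+1 \<Longrightarrow> j < 2*g+1 \<Longrightarrow> i \<noteq> j \<Longrightarrow> \<not> nv (lam i - lam j) < 1"
    and inf0: "fps_nth (G0 None) 0 = 0"
    and inf1: "fps_nth (G1 None) 0 = 0"
    and eq0: "\<And>la. la \<in> pts (2*g+1) \<Longrightarrow> dt la (fps_to_fls (G0 la)) = 0"
    and eq1: "\<And>la. la \<in> pts (2*g+1) \<Longrightarrow>
        dt la (fps_to_fls (G1 la))
          + phi_rat lam la (pderiv (Qpoly (2*g+1) lam)) (2 * Qpoly (2*g+1) lam) * fps_to_fls (G1 la)
        = (\<Sum>la'\<in>pts (2*g+1).
             Pr_at lam la' (phi_rat lam la' (pderiv (Qpoly (2*g+1) lam)) (2 * Qpoly (2*g+1) lam)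
                            * fps_to_fls (G1 la')) la)"
  shows "in_Mc (2*g+1) nv G0 G1 \<and> in_H (2*g+1) nv lam G0 G1"
proof -
  define n where "n = 2*g+1"
  interpret branch_points p nv n lam
    by unfold_locales (use K lam_int lam_dist in \<open>auto simp: n_def witt_abs_def\<close>)
  have conv0: "conv_open_disc nv (G0 la)" if "la \<in> pts n" for la
    using eq0[of la] that unfolding n_def by (intro const_conv dt_zero_imp_const[of la])
  have "odd n" by (simp add: n_def)
  from G1_conv[where G = G1, OF this inf1] have conv1: "conv_open_disc nv (G1 la)" if "la \<in> pts n" for la
    using eq1[of la] that unfolding n_def by blast
  have Mc: "in_Mc n nv G0 G1"
    unfolding in_Mc_def in_Bc_def using conv0 conv1 inf0 inf1 by auto
  moreover have "in_H n nv lam G0 G1"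
    using Mc eq0 eq1 unfolding in_H_def rat_act_def by (simp add: n_def algebra_simps)
  ultimately show ?thesis by (simp add: n_def)
qed

end
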